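(* Let $G$ be a graph with smallest eigenvalue $\theta_{\min}(G)$ which is $s$-integrable, and let $N$ be a $\rho\times|V(G)|$ integral matrix with $A(G)+\lceil-\theta_{\min}(G)\rceil I=\frac{1}{s}N^TN$ (rows of $N$ are vectors indexed by $V(G)$). Then: \begin{enumerate} \item There is a row $\mathbf{r}$ of $N$ with $$|{\rm supp}(\mathbf{r})|\leq\frac{s\lceil-\theta_{\min}(G)\rceil\,|V(G)|}{\rho}\leq\frac{s\lceil-\theta_{\min}(G)\rceil\,|V(G)|}{{\rm rank}(N)}.$$ \item Let $\pi=\{V_1,\ldots,V_p\}$ be an equitable partition of $V(G)$ whose quotient matrix $Q_\pi$ has $\theta_{\min}(G)$ as its smallest eigenvalue. If $\theta_{\min}(G)$ is an integer, then for every row $\mathbf{r}$ of $N$ and every eigenvector $\mathbf{u}=(\mathbf{u}_1,\ldots,\mathbf{u}_p)^T$ of $Q_\pi$ with eigenvalue $\theta_{\min}(G)$, $$\sum_{i=1}^p\mathbf{u}_i\sum_{x\in V_i}\mathbf{r}_x=0.$$ \item For every row $\mathbf{r}$ of $N$, $$\sum_{x\in V(G)}\mathbf{r}_x\sum_{y\sim x}\mathbf{r}_y\;\geq\;\frac{1}{s}(\mathbf{r}\mathbf{r}^T)^2+\lfloor\theta_{\min}(G)\rfloor\,\mathbf{r}\mathbf{r}^T.$$ \item If $G'$ is an induced subgraph of $G$ with $\lfloor\theta_{\min}(G')\rfloor=\lfloor\theta_{\min}(G)\rfloor$, then $G'$ is also $s$-integrable. \end{enumerate}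
   Context: Graphs are finite, simple, undirected; $A(G)$ is the adjacency matrix and $\theta_{\min}(G)$ the smallest eigenvalue; $x\sim y$ means adjacency. ${\rm supp}(\mathbf{r})=\{i\mid \mathbf{r}_i\neq 0\}$. A graph $G$ is $s$-integrable ($s$ a positive integer) if there is an integral matrix $N$ with $A(G)-\lfloor\theta_{\min}(G)\rfloor I=\frac{1}{s}N^TN$ (equivalently, the lattice with Gram matrix $A(G)-\lfloor\theta_{\min}(G)\rfloor I$ scaled by $\sqrt{s}$ embeds in a standard lattice $\mathbb{Z}^m$). A partition $\pi=\{V_1,\ldots,V_p\}$ of $V(G)$ is equitable if for all $i,j$ every vertex of $V_i$ has the same number $q_{i,j}$ of neighbours in $V_j$; its quotient matrix is $Q_\pi=(q_{i,j})$. *)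

theory Defs
  imports Complex_Main
begin

text \<open>A finite simple undirected graph: finite nonempty vertex set V and a
  symmetric irreflexive adjacency relation E (only its restriction to V matters).\<close>
definition graph :: "'a set \<Rightarrow> ('a \<Rightarrow> 'a \<Rightarrow> bool) \<Rightarrow> bool" where
  "graph V E \<longleftrightarrow> finite V \<and> V \<noteq> {} \<and>
     (\<forall>x\<in>V. \<forall>y\<in>V. E x y \<longleftrightarrow> E y x) \<and> (\<forall>x\<in>V. \<not> E x x)"

definition adj :: "'a set \<Rightarrow> ('a \<Rightarrow> 'a \<Rightarrow> bool) \<Rightarrow> 'a \<Rightarrow> 'a \<Rightarrow> real" where
  "adj V E x y = (if x \<in> V \<and> y \<in> V \<and> E x y then 1 else 0)"

definition is_eigenvector :: "'i set \<Rightarrow> ('i \<Rightarrow> 'i \<Rightarrow> real) \<Rightarrow> real \<Rightarrow> ('i \<Rightarrow> real) \<Rightarrow> bool" where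
  "is_eigenvector I M lam v \<longleftrightarrow> (\<exists>x\<in>I. v x \<noteq> 0) \<and>
     (\<forall>x\<in>I. (\<Sum>y\<in>I. M x y * v y) = lam * v x)"

definition is_eigenvalue :: "'i set \<Rightarrow> ('i \<Rightarrow> 'i \<Rightarrow> real) \<Rightarrow> real \<Rightarrow> bool" where
  "is_eigenvalue I M lam \<longleftrightarrow> (\<exists>v. is_eigenvector I M lam v)"

definition smallest_eigenvalue :: "'i set \<Rightarrow> ('i \<Rightarrow> 'i \<Rightarrow> real) \<Rightarrow> real" where
  "smallest_eigenvalue I M = Min {lam. is_eigenvalue I M lam}"

definition theta_min :: "'a set \<Rightarrow> ('a \<Rightarrow> 'a \<Rightarrow> bool) \<Rightarrow> real" where
  "theta_min V E = smallest_eigenvalue V (adj V E)"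

definition kron :: "'a \<Rightarrow> 'a \<Rightarrow> real" where
  "kron x y = (if x = y then 1 else 0)"

text \<open>G is s-integrable: A(G) - floor(theta_min) I = (1/s) N^T N for an integral
  m x |V| matrix N (rows indexed by {..<m}, columns by V).\<close>
definition s_integrable :: "'a set \<Rightarrow> ('a \<Rightarrow> 'a \<Rightarrow> bool) \<Rightarrow> nat \<Rightarrow> bool" where
  "s_integrable V E s \<longleftrightarrow> (\<exists>(m::nat) (N::nat \<Rightarrow> 'a \<Rightarrow> int).
     \<forall>x\<in>V. \<forall>y\<in>V. adj V E x y - real_of_int \<lfloor>theta_min V E\<rfloor> * kron x y
        = (1 / real s) * (\<Sum>i<m. real_of_int (N i x * N i y)))"

definition supp_row :: "'a set \<Rightarrow> (nat \<Rightarrow> 'a \<Rightarrow> int) \<Rightarrow> nat \<Rightarrow> 'a set" where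
  "supp_row V N i = {x \<in> V. N i x \<noteq> 0}"

text \<open>Rank of the m x |V| matrix N (over the reals), as its row rank: the maximal
  number of linearly independent rows.\<close>
definition rows_lin_indep :: "'a set \<Rightarrow> (nat \<Rightarrow> 'a \<Rightarrow> int) \<Rightarrow> nat set \<Rightarrow> bool" where
  "rows_lin_indep V N S \<longleftrightarrow> (\<forall>c::nat \<Rightarrow> real.
     (\<forall>x\<in>V. (\<Sum>i\<in>S. c i * real_of_int (N i x)) = 0) \<longrightarrow> (\<forall>i\<in>S. c i = 0))"

definition mat_rank :: "'a set \<Rightarrow> nat \<Rightarrow> (nat \<Rightarrow> 'a \<Rightarrow> int) \<Rightarrow> nat" where
  "mat_rank V m N = Max {card S | S. S \<subseteq> {..<m} \<and> rows_lin_indep V N S}"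

definition is_partition :: "'a set \<Rightarrow> nat \<Rightarrow> (nat \<Rightarrow> 'a set) \<Rightarrow> bool" where
  "is_partition V p P \<longleftrightarrow> (\<forall>i<p. P i \<noteq> {} \<and> P i \<subseteq> V) \<and>
     (\<forall>i<p. \<forall>j<p. i \<noteq> j \<longrightarrow> P i \<inter> P j = {}) \<and> (\<Union>i<p. P i) = V"

definition equitable :: "'a set \<Rightarrow> ('a \<Rightarrow> 'a \<Rightarrow> bool) \<Rightarrow> nat \<Rightarrow> (nat \<Rightarrow> 'a set) \<Rightarrow> bool" where
  "equitable V E p P \<longleftrightarrow> is_partition V p P \<and>
     (\<forall>i<p. \<forall>j<p. \<forall>x\<in>P i. \<forall>y\<in>P i. card {z \<in> P j. E x z} = card {z \<in> P j. E y z})"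

text \<open>Quotient matrix q_{ij} = number of neighbours in V_j of a vertex of V_i.\<close>
definition quotient_matrix :: "('a \<Rightarrow> 'a \<Rightarrow> bool) \<Rightarrow> (nat \<Rightarrow> 'a set) \<Rightarrow> nat \<Rightarrow> nat \<Rightarrow> real" where
  "quotient_matrix E P i j = real (card {z \<in> P j. E (SOME x. x \<in> P i) z})"

end

theory Submission
  imports Defs
begin

text \<open>Everything follows from the representation
  \<open>A(G) + c I = (1/s) N\<^sup>T N\<close> with \<open>c = \<lceil>-\<theta>\<^sub>m\<^sub>i\<^sub>n\<rceil> = -\<lfloor>\<theta>\<^sub>m\<^sub>i\<^sub>n\<rfloor>\<close>, read through the
  quadratic form \<open>w\<^sup>T (A + c I) w = (1/s) \<Sum>\<^sub>i (N\<^sub>i \<cdot> w)\<^sup>2\<close>.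
  (1) The diagonal gives \<open>\<Sum>\<^sub>i N\<^sub>i\<^sub>x\<^sup>2 = s c\<close> for every vertex, so the rows have total squared
  norm \<open>s c |V|\<close>; an integral row has support at most its squared norm, and some row is at most
  average. (2) If \<open>\<theta>\<^sub>m\<^sub>i\<^sub>n\<close> is an integer then \<open>c = -\<theta>\<^sub>m\<^sub>i\<^sub>n\<close>; an eigenvector of the quotient
  matrix lifts to a \<open>\<theta>\<^sub>m\<^sub>i\<^sub>n\<close>-eigenvector \<open>v\<close> of \<open>A\<close>, so the quadratic form vanishes at \<open>v\<close> and
  every row of \<open>N\<close> is orthogonal to \<open>v\<close>. (3) Take \<open>w = N\<^sub>i\<close> and keep only the \<open>i\<close>-th square.
  (4) The restriction of \<open>N\<close> to the columns of \<open>V'\<close> represents the induced subgraph.\<close>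

subsection \<open>Quadratic forms\<close>

definition gram :: "nat \<Rightarrow> nat \<Rightarrow> (nat \<Rightarrow> 'a \<Rightarrow> int) \<Rightarrow> 'a \<Rightarrow> 'a \<Rightarrow> real" where
  "gram s m N x y = (1 / real s) * (\<Sum>i<m. real_of_int (N i x * N i y))"

definition quad_form :: "'a set \<Rightarrow> ('a \<Rightarrow> 'a \<Rightarrow> real) \<Rightarrow> ('a \<Rightarrow> real) \<Rightarrow> real" where
  "quad_form V M w = (\<Sum>x\<in>V. \<Sum>y\<in>V. w x * M x y * w y)"

lemma quad_form_cong:
  assumes "\<forall>x\<in>V. \<forall>y\<in>V. M x y = M' x y"
  shows "quad_form V M w = quad_form V M' w"
  using assms unfolding quad_form_def by simp

lemma quad_form_gram:
  "quad_form V (gram s m N) w = (1 / real s) * (\<Sum>i<m. (\<Sum>x\<in>V. real_of_int (N i x) * w x) ^ 2)"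
proof -
  have "quad_form V (gram s m N) w
      = (1 / real s) * (\<Sum>i<m. \<Sum>x\<in>V. \<Sum>y\<in>V. (real_of_int (N i x) * w x) * (real_of_int (N i y) * w y))"
    unfolding quad_form_def gram_def
    by (simp add: sum_distrib_left sum_distrib_right sum.swap[of _ "{..<m}"] mult_ac)
  then show ?thesis
    by (simp add: power2_eq_square sum_product)
qed

lemma quad_form_add_kron:
  assumes "finite V"
  shows "quad_form V (\<lambda>x y. M x y + c * kron x y) w = quad_form V M w + c * (\<Sum>x\<in>V. w x ^ 2)"
proof -
  have "(\<Sum>y\<in>V. w x * (c * kron x y) * w y) = c * w x ^ 2" if "x \<in> V" for x
  proof -
    have "(\<Sum>y\<in>V. w x * (c * kron x y) * w y) = (\<Sum>y\<in>V. if y = x then c * w x ^ 2 else 0)"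
      by (intro sum.cong) (auto simp: kron_def power2_eq_square)
    then show ?thesis
      using that assms by simp
  qed
  then show ?thesis
    unfolding quad_form_def by (simp add: distrib_left distrib_right sum.distrib sum_distrib_left)
qed

lemma quad_form_eigenvector:
  assumes "\<forall>x\<in>V. (\<Sum>y\<in>V. M x y * v y) = lam * v x"
  shows "quad_form V M v = lam * (\<Sum>x\<in>V. v x ^ 2)"
proof -
  have "quad_form V M v = (\<Sum>x\<in>V. v x * (\<Sum>y\<in>V. M x y * v y))"
    unfolding quad_form_def by (simp add: sum_distrib_left mult_ac)
  also have "\<dots> = (\<Sum>x\<in>V. lam * v x ^ 2)"
    using assms by (simp add: power2_eq_square mult_ac)
  finally show ?thesis
    by (simp add: sum_distrib_left)
qed

lemma quad_form_adj:
  assumes "finite V"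
  shows "quad_form V (adj V E) w = (\<Sum>x\<in>V. w x * (\<Sum>y\<in>{y\<in>V. E x y}. w y))"
proof -
  have "(\<Sum>y\<in>V. w x * adj V E x y * w y) = w x * (\<Sum>y\<in>{y\<in>V. E x y}. w y)" if "x \<in> V" for x
  proof -
    have "(\<Sum>y\<in>V. w x * adj V E x y * w y) = (\<Sum>y\<in>V. if E x y then w x * w y else 0)"
      using that by (intro sum.cong) (auto simp: adj_def)
    also have "\<dots> = (\<Sum>y\<in>{y\<in>V. E x y}. w x * w y)"
      by (simp add: assms sum.inter_filter)
    finally show ?thesis
      by (simp add: sum_distrib_left)
  qed
  then show ?thesis
    unfolding quad_form_def by simp
qed

subsection \<open>Scaled Gram matrices of integral matrices\<close>

lemma gram_row_quad_form_ge:
  assumes rep: "\<forall>x\<in>V. \<forall>y\<in>V. M x y + c * kron x y = gram s m N x y"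
    and "finite V" and "i < m"
  shows "quad_form V M (\<lambda>x. real_of_int (N i x))
    \<ge> (1 / real s) * (\<Sum>x\<in>V. real_of_int (N i x) ^ 2) ^ 2 - c * (\<Sum>x\<in>V. real_of_int (N i x) ^ 2)"
proof -
  define r where "r x = real_of_int (N i x)" for x
  have "(\<Sum>x\<in>V. r x ^ 2) ^ 2 = (\<Sum>x\<in>V. real_of_int (N i x) * r x) ^ 2"
    by (simp add: r_def power2_eq_square)
  also have "\<dots> \<le> (\<Sum>j<m. (\<Sum>x\<in>V. real_of_int (N j x) * r x) ^ 2)"
    using \<open>i < m\<close> by (intro member_le_sum) auto
  finally have "(1 / real s) * (\<Sum>x\<in>V. r x ^ 2) ^ 2 \<le> quad_form V (gram s m N) r"
    unfolding quad_form_gram by (simp add: divide_right_mono)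
  also have "\<dots> = quad_form V M r + c * (\<Sum>x\<in>V. r x ^ 2)"
    using quad_form_cong[OF rep] quad_form_add_kron[OF \<open>finite V\<close>] by simp
  finally show ?thesis
    unfolding r_def by simp
qed

lemma gram_row_orthogonal_eigenvector:
  assumes rep: "\<forall>x\<in>V. \<forall>y\<in>V. M x y + c * kron x y = gram s m N x y"
    and "finite V" and "s > 0" and "i < m"
    and eigen: "\<forall>x\<in>V. (\<Sum>y\<in>V. M x y * v y) = - c * v x"
  shows "(\<Sum>x\<in>V. real_of_int (N i x) * v x) = 0"
proof -
  have "quad_form V (gram s m N) v = quad_form V M v + c * (\<Sum>x\<in>V. v x ^ 2)"
    using quad_form_cong[OF rep] quad_form_add_kron[OF \<open>finite V\<close>] by simp
  also have "\<dots> = 0"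
    using quad_form_eigenvector[OF eigen] by simp
  finally have "(\<Sum>j<m. (\<Sum>x\<in>V. real_of_int (N j x) * v x) ^ 2) = 0"
    using \<open>s > 0\<close> unfolding quad_form_gram by simp
  then show ?thesis
    using \<open>i < m\<close> by (simp add: sum_nonneg_eq_0_iff)
qed

lemma card_supp_row_le_sum_squares:
  assumes "finite V"
  shows "real (card (supp_row V N i)) \<le> (\<Sum>x\<in>V. real_of_int (N i x) ^ 2)"
proof -
  have "real (card (supp_row V N i)) = (\<Sum>x\<in>V. if N i x \<noteq> 0 then 1 else 0)"
    unfolding supp_row_def using assms by (simp add: sum.inter_filter[symmetric])
  also have "\<dots> \<le> (\<Sum>x\<in>V. real_of_int (N i x) ^ 2)"
  proof (rule sum_mono)
    fix x
    have "N i x \<noteq> 0 \<Longrightarrow> 1 \<le> (N i x) ^ 2"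
      by (simp add: int_one_le_iff_zero_less)
    then show "(if N i x \<noteq> 0 then 1 else 0) \<le> real_of_int (N i x) ^ 2"
      by (cases "N i x = 0") (simp_all flip: of_int_power)
  qed
  finally show ?thesis .
qed

lemma sum_rows_squares_const_diag:
  assumes "\<forall>x\<in>V. gram s m N x x = d" and "s > 0"
  shows "(\<Sum>i<m. \<Sum>x\<in>V. real_of_int (N i x) ^ 2) = real s * d * real (card V)"
proof -
  have "(\<Sum>i<m. real_of_int (N i x) ^ 2) = real s * d" if "x \<in> V" for x
    using assms that by (simp add: gram_def power2_eq_square field_simps)
  then have "(\<Sum>x\<in>V. \<Sum>i<m. real_of_int (N i x) ^ 2) = (\<Sum>x\<in>V. real s * d)"
    by simp
  then show ?thesis
    by (simp add: sum.swap[of _ "{..<m}"] mult.commute)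
qed

lemma gram_diag_nonneg: "0 \<le> gram s m N x x"
  unfolding gram_def by (simp add: sum_nonneg)

lemma finite_mat_rank_candidates:
  "finite {card S | S. S \<subseteq> {..<m} \<and> rows_lin_indep V N S}"
proof (rule finite_subset)
  show "{card S | S. S \<subseteq> {..<m} \<and> rows_lin_indep V N S} \<subseteq> {..m}"
    by (auto dest: card_mono[OF finite_lessThan])
qed simp

lemma card_le_mat_rank:
  assumes "S \<subseteq> {..<m}" and "rows_lin_indep V N S"
  shows "card S \<le> mat_rank V m N"
  unfolding mat_rank_def using assms by (intro Max_ge[OF finite_mat_rank_candidates]) blast

lemma mat_rank_le: "mat_rank V m N \<le> m"
proof -
  have "rows_lin_indep V N {}"
    by (simp add: rows_lin_indep_def)
  then have "mat_rank V m N \<in> {card S | S. S \<subseteq> {..<m} \<and> rows_lin_indep V N S}"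
    unfolding mat_rank_def by (intro Max_in[OF finite_mat_rank_candidates]) blast
  then show ?thesis
    by (auto dest: card_mono[OF finite_lessThan])
qed

lemma mat_rank_pos:
  assumes "x \<in> V" and "gram s m N x x \<noteq> 0"
  shows "0 < mat_rank V m N"
proof -
  have "(\<Sum>i<m. real_of_int (N i x * N i x)) \<noteq> 0"
    using assms(2) unfolding gram_def by auto
  then obtain i where "i < m" and "N i x \<noteq> 0"
    by (auto elim: sum.not_neutral_contains_not_neutral)
  then have "rows_lin_indep V N {i}"
    using \<open>x \<in> V\<close> unfolding rows_lin_indep_def by auto
  then have "card {i} \<le> mat_rank V m N"
    using \<open>i < m\<close> by (intro card_le_mat_rank) auto
  then show ?thesis
    by simp
qed

lemma sparse_row_of_const_diag_gram:
  assumes diag: "\<forall>x\<in>V. gram s m N x x = d" and "finite V" and "m > 0" and "s > 0"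
  shows "\<exists>i<m. real (card (supp_row V N i)) \<le> real s * d * real (card V) / real m
    \<and> real s * d * real (card V) / real m \<le> real s * d * real (card V) / real (mat_rank V m N)"
proof -
  define sq where "sq i = (\<Sum>x\<in>V. real_of_int (N i x) ^ 2)" for i
  obtain i where "i < m" and "sq i = Min (sq ` {..<m})"
    using Min_in[of "sq ` {..<m}"] \<open>m > 0\<close> by fastforce
  then have "real (card {..<m}) * sq i \<le> (\<Sum>j<m. sq j)"
    by (intro sum_bounded_below) simp
  then have "real m * sq i \<le> real s * d * real (card V)"
    using sum_rows_squares_const_diag[OF diag \<open>s > 0\<close>] unfolding sq_def by simp
  moreover have "real m * real (card (supp_row V N i)) \<le> real m * sq i"
    using card_supp_row_le_sum_squares[OF \<open>finite V\<close>] unfolding sq_def by (simp add: mult_left_mono)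
  ultimately have "real (card (supp_row V N i)) * real m \<le> real s * d * real (card V)"
    by (simp add: mult.commute)
  then have sparse: "real (card (supp_row V N i)) \<le> real s * d * real (card V) / real m"
    using \<open>m > 0\<close> by (simp add: pos_le_divide_eq)
  have "real s * d * real (card V) / real m \<le> real s * d * real (card V) / real (mat_rank V m N)"
  proof (cases "d = 0 \<or> V = {}")
    case False
    then obtain x where "x \<in> V" and "gram s m N x x = d" and "d \<noteq> 0"
      using diag by auto
    then have "0 < mat_rank V m N" and "0 \<le> d"
      using mat_rank_pos[of x V s m N] gram_diag_nonneg[of s m N x] by simp_all
    then show ?thesis
      using mat_rank_le[of V m N] by (intro divide_left_mono) auto
  qed auto
  with \<open>i < m\<close> sparse show ?thesis
    by blast
qed

subsection \<open>Equitable partitions\<close>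

lemma
  assumes "is_partition V p P" and "k < p"
  shows partition_part_ne: "P k \<noteq> {}"
    and partition_part_subset: "P k \<subseteq> V"
  using assms unfolding is_partition_def by blast+

lemma partition_part_disjoint:
  assumes "is_partition V p P" and "j < p" and "k < p" and "j \<noteq> k"
  shows "P j \<inter> P k = {}"
  using assms unfolding is_partition_def by blast

lemma partition_obtain_part:
  assumes "is_partition V p P" and "x \<in> V"
  obtains k where "k < p" and "x \<in> P k"
  using assms unfolding is_partition_def by blast

definition lift_partition :: "nat \<Rightarrow> (nat \<Rightarrow> 'a set) \<Rightarrow> (nat \<Rightarrow> real) \<Rightarrow> 'a \<Rightarrow> real" where
  "lift_partition p P u x = (\<Sum>j<p. if x \<in> P j then u j else 0)"

lemma lift_partition_eq:
  assumes "is_partition V p P" and "k < p" and "x \<in> P k"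
  shows "lift_partition p P u x = u k"
proof -
  have "x \<notin> P j" if "j < p" and "j \<noteq> k" for j
    using partition_part_disjoint[OF assms(1) that(1) assms(2) that(2)] assms(3) by blast
  then have "lift_partition p P u x = (\<Sum>j<p. if j = k then u j else 0)"
    unfolding lift_partition_def using assms(3) by (intro sum.cong) auto
  then show ?thesis
    using \<open>k < p\<close> by simp
qed

lemma sum_mult_lift_partition:
  assumes "is_partition V p P" and "finite V"
  shows "(\<Sum>x\<in>V. r x * lift_partition p P u x) = (\<Sum>j<p. u j * (\<Sum>x\<in>P j. r x))"
proof -
  have per_part: "(\<Sum>x\<in>V. r x * (if x \<in> P j then u j else 0)) = u j * (\<Sum>x\<in>P j. r x)"
    if "j < p" for j
  proof -
    have "(\<Sum>x\<in>V. r x * (if x \<in> P j then u j else 0)) = (\<Sum>x\<in>V. if x \<in> P j then u j * r x else 0)"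
      by (intro sum.cong) auto
    also have "\<dots> = (\<Sum>x\<in>{x \<in> V. x \<in> P j}. u j * r x)"
      by (rule sum.inter_filter[OF assms(2), symmetric])
    also have "{x \<in> V. x \<in> P j} = P j"
      using partition_part_subset[OF assms(1) that] by blast
    finally show ?thesis
      by (simp add: sum_distrib_left)
  qed
  have "(\<Sum>x\<in>V. r x * lift_partition p P u x) = (\<Sum>x\<in>V. \<Sum>j<p. r x * (if x \<in> P j then u j else 0))"
    unfolding lift_partition_def by (simp add: sum_distrib_left)
  also have "\<dots> = (\<Sum>j<p. \<Sum>x\<in>V. r x * (if x \<in> P j then u j else 0))"
    by (rule sum.swap)
  also have "\<dots> = (\<Sum>j<p. u j * (\<Sum>x\<in>P j. r x))"
    by (rule sum.cong[OF refl], rule per_part) simp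
  finally show ?thesis .
qed

lemma adj_mult_lift_partition:
  assumes "equitable V E p P" and "finite V" and "k < p" and "x \<in> P k"
  shows "(\<Sum>y\<in>V. adj V E x y * lift_partition p P u y) = (\<Sum>j<p. quotient_matrix E P k j * u j)"
proof -
  have part: "is_partition V p P"
    and regular: "\<forall>i<p. \<forall>j<p. \<forall>x\<in>P i. \<forall>y\<in>P i. card {z \<in> P j. E x z} = card {z \<in> P j. E y z}"
    using assms(1) unfolding equitable_def by blast+
  have "x \<in> V"
    using partition_part_subset[OF part assms(3)] assms(4) by blast
  have "(SOME x. x \<in> P k) \<in> P k"
    using partition_part_ne[OF part assms(3)] by (simp add: some_in_eq)
  then have count: "real (card {z \<in> P j. E x z}) = quotient_matrix E P k j" if "j < p" for j
    unfolding quotient_matrix_def using regular assms(3,4) that by metis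
  have per_part: "(\<Sum>y\<in>V. adj V E x y * (if y \<in> P j then u j else 0)) = quotient_matrix E P k j * u j"
    if "j < p" for j
  proof -
    have "(\<Sum>y\<in>V. adj V E x y * (if y \<in> P j then u j else 0))
        = (\<Sum>y\<in>V. if y \<in> P j \<and> E x y then u j else 0)"
      using \<open>x \<in> V\<close> by (intro sum.cong) (auto simp: adj_def)
    also have "\<dots> = (\<Sum>y\<in>{y \<in> V. y \<in> P j \<and> E x y}. u j)"
      by (rule sum.inter_filter[OF assms(2), symmetric])
    also have "{y \<in> V. y \<in> P j \<and> E x y} = {z \<in> P j. E x z}"
      using partition_part_subset[OF part that] by blast
    finally show ?thesis
      using count[OF that] by simp
  qed
  have "(\<Sum>y\<in>V. adj V E x y * lift_partition p P u y)
      = (\<Sum>y\<in>V. \<Sum>j<p. adj V E x y * (if y \<in> P j then u j else 0))"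
    unfolding lift_partition_def by (simp add: sum_distrib_left)
  also have "\<dots> = (\<Sum>j<p. \<Sum>y\<in>V. adj V E x y * (if y \<in> P j then u j else 0))"
    by (rule sum.swap)
  also have "\<dots> = (\<Sum>j<p. quotient_matrix E P k j * u j)"
    by (rule sum.cong[OF refl], rule per_part) simp
  finally show ?thesis .
qed

lemma lift_partition_eigenvector:
  assumes "equitable V E p P" and "finite V"
    and eigen: "is_eigenvector {..<p} (quotient_matrix E P) lam u"
  shows "is_eigenvector V (adj V E) lam (lift_partition p P u)"
proof -
  have part: "is_partition V p P"
    using assms(1) unfolding equitable_def by blast
  obtain k where "k < p" and "u k \<noteq> 0"
    using eigen unfolding is_eigenvector_def by auto
  obtain x where "x \<in> P k"
    using partition_part_ne[OF part \<open>k < p\<close>] by blast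
  have "x \<in> V"
    using partition_part_subset[OF part \<open>k < p\<close>] \<open>x \<in> P k\<close> by blast
  moreover have "lift_partition p P u x \<noteq> 0"
    using lift_partition_eq[OF part \<open>k < p\<close> \<open>x \<in> P k\<close>] \<open>u k \<noteq> 0\<close> by simp
  moreover have "(\<Sum>y\<in>V. adj V E x y * lift_partition p P u y) = lam * lift_partition p P u x"
    if "x \<in> V" for x
  proof -
    obtain k where "k < p" and "x \<in> P k"
      using partition_obtain_part[OF part \<open>x \<in> V\<close>] .
    then show ?thesis
      using adj_mult_lift_partition[OF assms(1,2)] lift_partition_eq[OF part] eigen
      unfolding is_eigenvector_def by simp
  qed
  ultimately show ?thesis
    unfolding is_eigenvector_def by blast
qed

subsection \<open>Induced subgraphs\<close>

lemma s_integrable_induced_subgraph: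
  assumes "V' \<subseteq> V" and "\<lfloor>theta_min V' E\<rfloor> = \<lfloor>theta_min V E\<rfloor>"
    and rep: "\<forall>x\<in>V. \<forall>y\<in>V. adj V E x y - real_of_int \<lfloor>theta_min V E\<rfloor> * kron x y = gram s m N x y"
  shows "s_integrable V' E s"
proof -
  have "adj V' E x y = adj V E x y" if "x \<in> V'" and "y \<in> V'" for x y
    using assms(1) that by (auto simp: adj_def)
  then have "\<forall>x\<in>V'. \<forall>y\<in>V'. adj V' E x y - real_of_int \<lfloor>theta_min V' E\<rfloor> * kron x y
      = (1 / real s) * (\<Sum>i<m. real_of_int (N i x * N i y))"
    using rep assms(1,2) unfolding gram_def by (simp add: subset_iff)
  then show ?thesis
    unfolding s_integrable_def by blast
qed

theorem proposition3p1:
  fixes V :: "'a set" and E :: "'a \<Rightarrow> 'a \<Rightarrow> bool" and s :: nat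
    and rho :: nat and N :: "nat \<Rightarrow> 'a \<Rightarrow> int"
  assumes G: "graph V E"
    and s_pos: "s > 0"
    and integrable: "s_integrable V E s"
    and rho_pos: "rho > 0"
    and hN: "\<forall>x\<in>V. \<forall>y\<in>V. adj V E x y + real_of_int \<lceil>- theta_min V E\<rceil> * kron x y
               = (1 / real s) * (\<Sum>i<rho. real_of_int (N i x * N i y))"
  shows
    "(\<exists>i<rho.
        real (card (supp_row V N i))
          \<le> real s * real_of_int \<lceil>- theta_min V E\<rceil> * real (card V) / real rho
      \<and> real s * real_of_int \<lceil>- theta_min V E\<rceil> * real (card V) / real rho
          \<le> real s * real_of_int \<lceil>- theta_min V E\<rceil> * real (card V) / real (mat_rank V rho N))
   \<and> (\<forall>p P. equitable V E p P
        \<longrightarrow> smallest_eigenvalue {..<p} (quotient_matrix E P) = theta_min V E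
        \<longrightarrow> theta_min V E \<in> \<int>
        \<longrightarrow> (\<forall>i<rho. \<forall>u. is_eigenvector {..<p} (quotient_matrix E P) (theta_min V E) u
              \<longrightarrow> (\<Sum>j<p. u j * (\<Sum>x\<in>P j. real_of_int (N i x))) = 0))
   \<and> (\<forall>i<rho.
        (\<Sum>x\<in>V. real_of_int (N i x) * (\<Sum>y\<in>{y\<in>V. E x y}. real_of_int (N i y)))
          \<ge> (1 / real s) * (\<Sum>x\<in>V. real_of_int (N i x) ^ 2) ^ 2
             + real_of_int \<lfloor>theta_min V E\<rfloor> * (\<Sum>x\<in>V. real_of_int (N i x) ^ 2))
   \<and> (\<forall>V'. V' \<subseteq> V \<longrightarrow> V' \<noteq> {}
        \<longrightarrow> \<lfloor>theta_min V' E\<rfloor> = \<lfloor>theta_min V E\<rfloor>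
        \<longrightarrow> s_integrable V' E s)"
proof -
  have "finite V" and irrefl: "\<forall>x\<in>V. \<not> E x x"
    using G unfolding graph_def by auto
  define c where "c = real_of_int \<lceil>- theta_min V E\<rceil>"
  have c_floor: "c = - real_of_int \<lfloor>theta_min V E\<rfloor>"
    unfolding c_def by (simp add: ceiling_minus)
  have rep: "\<forall>x\<in>V. \<forall>y\<in>V. adj V E x y + c * kron x y = gram s rho N x y"
    using hN unfolding c_def gram_def .
  have "\<forall>x\<in>V. gram s rho N x x = c"
    using rep irrefl unfolding adj_def kron_def by force
  note part1 = sparse_row_of_const_diag_gram[OF this \<open>finite V\<close> rho_pos s_pos, unfolded c_def]
  have part2: "(\<Sum>j<p. u j * (\<Sum>x\<in>P j. real_of_int (N i x))) = 0"
    if "equitable V E p P" and "theta_min V E \<in> \<int>" and "i < rho"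
      and "is_eigenvector {..<p} (quotient_matrix E P) (theta_min V E) u" for p P i u
  proof -
    have "c = - theta_min V E"
      using c_floor \<open>theta_min V E \<in> \<int>\<close> by (auto elim: Ints_cases)
    then have "\<forall>x\<in>V. (\<Sum>y\<in>V. adj V E x y * lift_partition p P u y) = - c * lift_partition p P u x"
      using lift_partition_eigenvector[OF that(1) \<open>finite V\<close> that(4)] unfolding is_eigenvector_def by simp
    from gram_row_orthogonal_eigenvector[OF rep \<open>finite V\<close> s_pos \<open>i < rho\<close> this] show ?thesis
      using sum_mult_lift_partition[OF _ \<open>finite V\<close>] that(1) unfolding equitable_def by simp
  qed
  note part3 = gram_row_quad_form_ge[OF rep \<open>finite V\<close>]
  have "\<forall>x\<in>V. \<forall>y\<in>V. adj V E x y - real_of_int \<lfloor>theta_min V E\<rfloor> * kron x y = gram s rho N x y"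
    using rep c_floor by simp
  note part4 = s_integrable_induced_subgraph[OF _ _ this]
  show ?thesis
    using part1 part2 part3 part4 c_floor quad_form_adj[OF \<open>finite V\<close>] by auto
qed

end
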